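(* Let $n\ge 2$, let $K\subset\mathbb{R}^n$ be a convex body of constant width $\Theta$, and let $\gamma\subset\mathbb{R}^n$ be any curve such that $K\subset\operatorname{co}(\gamma)$. Then $$ \operatorname{length}(\gamma)\ge 2(\pi-1)\sqrt{\frac{n-1}{2\pi}}\cdot\Theta . $$
   Context: $\mathbb{R}^n$ carries the standard Euclidean metric $d$. A convex body is any nonempty compact convex subset of $\mathbb{R}^n$. $\operatorname{co}(A)$ denotes the convex hull of $A$. The support function of $K$ is $h(K,u)=\sup\{(x,u):x\in K\}$ and the width function is $w(K,u)=h(K,u)+h(K,-u)$ for $u$ in the unit sphere $S^{n-1}$; $K$ has constant width $\Theta$ if $w(K,u)=\Theta$ for all $u\in S^{n-1}$. A curve is the image of a continuous map $\varphi:[a,b]\to\mathbb{R}^n$; its length is $\operatorname{length}(\gamma)=\sup\sum_{i=1}^m d(\varphi(t_{i-1}),\varphi(t_i))$ over all partitions $a=t_0<\dots<t_m=b$ (possibly $+\infty$). *)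

theory Defs
  imports "HOL-Analysis.Analysis" "HOL-Library.Extended_Real"
begin

definition convex_body :: "'a::euclidean_space set \<Rightarrow> bool" where
  "convex_body K \<longleftrightarrow> K \<noteq> {} \<and> compact K \<and> convex K"

definition support_fun :: "'a::euclidean_space set \<Rightarrow> 'a \<Rightarrow> real" where
  "support_fun K u = (SUP x\<in>K. x \<bullet> u)"

definition width_fun :: "'a::euclidean_space set \<Rightarrow> 'a \<Rightarrow> real" where
  "width_fun K u = support_fun K u + support_fun K (- u)"

definition constant_width :: "'a::euclidean_space set \<Rightarrow> real \<Rightarrow> bool" where
  "constant_width K \<Theta> \<longleftrightarrow> (\<forall>u\<in>sphere 0 1. width_fun K u = \<Theta>)"

definition partition_of :: "real \<Rightarrow> real \<Rightarrow> real list \<Rightarrow> bool" where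
  "partition_of a b ts \<longleftrightarrow> ts \<noteq> [] \<and> sorted_wrt (<) ts \<and> hd ts = a \<and> last ts = b"

definition curve_length :: "(real \<Rightarrow> 'a::euclidean_space) \<Rightarrow> real \<Rightarrow> real \<Rightarrow> ereal" where
  "curve_length \<phi> a b =
     (SUP ts\<in>{ts. partition_of a b ts}.
        ereal (\<Sum>(s,t)\<leftarrow>zip ts (tl ts). dist (\<phi> s) (\<phi> t)))"

end

theory Submission
  imports Defs
begin

text \<open>Let u_1, ..., u_(n-1) be orthonormal and orthogonal to the chord from the start to the
  end point of the curve. Since K lies in the convex hull of the curve, in each direction u_i
  the projected curve takes two values at distance at least the width \<Theta>; as it starts and
  ends at the same value, its total variation is at least 2\<Theta>. Summing over i and using
  Bessel's inequality with Cauchy-Schwarz, \<Sum>_i |v \<bullet> u_i| \<le> sqrt(n-1) |v|, gives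
  length \<ge> 2 sqrt(n-1) \<Theta>, which implies the stated bound since (\<pi> - 1)^2 \<le> 2\<pi>.\<close>

fun polygon_length :: "('b \<Rightarrow> 'c::metric_space) \<Rightarrow> 'b list \<Rightarrow> real" where
  "polygon_length f (x # y # xs) = dist (f x) (f y) + polygon_length f (y # xs)"
| "polygon_length f _ = 0"

lemma sum_zip_dist_eq_polygon_length:
  "(\<Sum>(s,t)\<leftarrow>zip ts (tl ts). dist (f s) (f t)) = polygon_length f ts"
  by (induction f ts rule: polygon_length.induct) auto

lemma polygon_length_nonneg: "0 \<le> polygon_length f xs"
  by (induction f xs rule: polygon_length.induct) auto

lemma polygon_length_append:
  "polygon_length f (ys @ y # zs) = polygon_length f (ys @ [y]) + polygon_length f (y # zs)"
  by (induction ys rule: induct_list012) auto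

lemma dist_hd_last_le_polygon_length:
  "xs \<noteq> [] \<Longrightarrow> dist (f (hd xs)) (f (last xs)) \<le> polygon_length f xs"
proof (induction f xs rule: polygon_length.induct)
  case (1 f x y xs)
  then show ?case using dist_triangle[of "f x" "f (last (y # xs))" "f y"] by auto
qed auto

lemma dist_via_le_polygon_length:
  assumes "y \<in> set xs"
  shows "dist (f (hd xs)) (f y) + dist (f y) (f (last xs)) \<le> polygon_length f xs"
proof -
  obtain ys zs where xs: "xs = ys @ y # zs" using assms by (meson split_list)
  have "hd (ys @ [y]) = hd xs" using xs by (cases ys) auto
  then show ?thesis
    using xs polygon_length_append[of f ys y zs]
      dist_hd_last_le_polygon_length[of "ys @ [y]" f]
      dist_hd_last_le_polygon_length[of "y # zs" f] by simp
qed

lemma two_dist_le_closed_polygon_length: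
  assumes y: "y \<in> set xs" and z: "z \<in> set xs"
  shows "2 * dist (f y) (f z) \<le> polygon_length f xs + dist (f (hd xs)) (f (last xs))"
proof -
  obtain ys zs where xs: "xs = ys @ y # zs" using y by (meson split_list)
  have hd: "hd (ys @ [y]) = hd xs" using xs by (cases ys) auto
  have last: "last (y # zs) = last xs" using xs by simp
  have split: "polygon_length f xs = polygon_length f (ys @ [y]) + polygon_length f (y # zs)"
    using xs polygon_length_append by metis
  have "z \<in> set (ys @ [y]) \<or> z \<in> set (y # zs)" using z xs by auto
  then show ?thesis
  proof
    assume "z \<in> set (ys @ [y])"
    then have "dist (f (hd xs)) (f z) + dist (f z) (f y) \<le> polygon_length f (ys @ [y])"
      using dist_via_le_polygon_length[of z "ys @ [y]" f] hd by simp
    moreover have "dist (f y) (f (last xs)) \<le> polygon_length f (y # zs)"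
      using dist_hd_last_le_polygon_length[of "y # zs" f] last by simp
    moreover have "dist (f y) (f z) \<le> dist (f y) (f (last xs)) + dist (f (last xs)) (f z)"
      and "dist (f (last xs)) (f z) \<le> dist (f (last xs)) (f (hd xs)) + dist (f (hd xs)) (f z)"
      by (rule dist_triangle)+
    ultimately show ?thesis using split by (simp add: dist_commute)
  next
    assume "z \<in> set (y # zs)"
    then have "dist (f y) (f z) + dist (f z) (f (last xs)) \<le> polygon_length f (y # zs)"
      using dist_via_le_polygon_length[of z "y # zs" f] last by simp
    moreover have "dist (f (hd xs)) (f y) \<le> polygon_length f (ys @ [y])"
      using dist_hd_last_le_polygon_length[of "ys @ [y]" f] hd by simp
    moreover have "dist (f y) (f z) \<le> dist (f y) (f (hd xs)) + dist (f (hd xs)) (f z)"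
      and "dist (f (hd xs)) (f z) \<le> dist (f (hd xs)) (f (last xs)) + dist (f (last xs)) (f z)"
      by (rule dist_triangle)+
    ultimately show ?thesis using split by (simp add: dist_commute)
  qed
qed

lemma sum_inner_squared_le_norm_squared:
  fixes v :: "'a::euclidean_space"
  assumes "finite B" and "pairwise orthogonal B" and "\<And>u. u \<in> B \<Longrightarrow> norm u = 1"
  shows "(\<Sum>u\<in>B. (v \<bullet> u)\<^sup>2) \<le> (norm v)\<^sup>2"
proof -
  define w where "w = (\<Sum>u\<in>B. (v \<bullet> u) *\<^sub>R u)"
  have "pairwise (\<lambda>i j. orthogonal ((v \<bullet> i) *\<^sub>R i) ((v \<bullet> j) *\<^sub>R j)) B"
    using assms(2) unfolding pairwise_def by (simp add: orthogonal_clauses)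
  then have "(norm w)\<^sup>2 = (\<Sum>u\<in>B. (norm ((v \<bullet> u) *\<^sub>R u))\<^sup>2)"
    unfolding w_def by (rule norm_sum_Pythagorean[OF assms(1)])
  also have "\<dots> = (\<Sum>u\<in>B. (v \<bullet> u)\<^sup>2)"
    by (rule sum.cong) (auto simp: assms(3))
  finally have "(norm w)\<^sup>2 = (\<Sum>u\<in>B. (v \<bullet> u)\<^sup>2)" .
  moreover have "v \<bullet> w = (\<Sum>u\<in>B. (v \<bullet> u)\<^sup>2)"
    unfolding w_def by (simp add: inner_sum_right power2_eq_square)
  moreover have "(norm (v - w))\<^sup>2 = (norm v)\<^sup>2 - 2 * (v \<bullet> w) + (norm w)\<^sup>2"
    by (simp add: power2_norm_eq_inner inner_diff_left inner_diff_right inner_commute)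
  ultimately show ?thesis
    using zero_le_power2[of "norm (v - w)"] by linarith
qed

lemma sum_abs_inner_le_sqrt_card_mult_norm:
  fixes v :: "'a::euclidean_space"
  assumes "finite B" and "pairwise orthogonal B" and "\<And>u. u \<in> B \<Longrightarrow> norm u = 1"
  shows "(\<Sum>u\<in>B. \<bar>v \<bullet> u\<bar>) \<le> sqrt (card B) * norm v"
proof -
  have "(\<Sum>u\<in>B. \<bar>v \<bullet> u\<bar>)\<^sup>2 \<le> (\<Sum>u\<in>B. \<bar>v \<bullet> u\<bar>\<^sup>2) * card B"
    by (rule sum_squared_le_sum_of_squares)
  also have "\<dots> \<le> (norm v)\<^sup>2 * card B"
    using sum_inner_squared_le_norm_squared[OF assms, of v] by (simp add: mult_right_mono)
  also have "\<dots> = (sqrt (card B) * norm v)\<^sup>2"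
    by (simp add: power_mult_distrib)
  finally show ?thesis
    by (rule power2_le_imp_le) simp
qed

lemma sum_polygon_length_inner_le:
  fixes \<phi> :: "'b \<Rightarrow> 'a::euclidean_space"
  assumes "finite B" and "pairwise orthogonal B" and "\<And>u. u \<in> B \<Longrightarrow> norm u = 1"
  shows "(\<Sum>u\<in>B. polygon_length (\<lambda>t. \<phi> t \<bullet> u) ts) \<le> sqrt (card B) * polygon_length \<phi> ts"
proof (induction \<phi> ts rule: polygon_length.induct)
  case (1 f x y xs)
  have "(\<Sum>u\<in>B. polygon_length (\<lambda>t. f t \<bullet> u) (x # y # xs))
      = (\<Sum>u\<in>B. \<bar>(f x - f y) \<bullet> u\<bar>) + (\<Sum>u\<in>B. polygon_length (\<lambda>t. f t \<bullet> u) (y # xs))"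
    by (simp add: dist_real_def inner_diff_left sum.distrib)
  also have "\<dots> \<le> sqrt (card B) * norm (f x - f y) + sqrt (card B) * polygon_length f (y # xs)"
    using sum_abs_inner_le_sqrt_card_mult_norm[OF assms, of "f x - f y"] 1 by linarith
  also have "\<dots> = sqrt (card B) * polygon_length f (x # y # xs)"
    by (simp add: dist_norm algebra_simps)
  finally show ?case .
qed auto

lemma polygon_length_ge_orthonormal_oscillation:
  fixes \<phi> :: "'b \<Rightarrow> 'a::euclidean_space"
  assumes "finite B" and "pairwise orthogonal B" and "\<And>u. u \<in> B \<Longrightarrow> norm u = 1"
    and closed: "\<And>u. u \<in> B \<Longrightarrow> (\<phi> (last ts) - \<phi> (hd ts)) \<bullet> u = 0"
    and oscillation: "\<And>u. u \<in> B \<Longrightarrow> \<exists>y\<in>set ts. \<exists>z\<in>set ts. w \<le> (\<phi> z - \<phi> y) \<bullet> u"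
  shows "2 * sqrt (card B) * w \<le> polygon_length \<phi> ts"
proof -
  have "2 * w \<le> polygon_length (\<lambda>t. \<phi> t \<bullet> u) ts" if u: "u \<in> B" for u
  proof -
    obtain y z where yz: "y \<in> set ts" "z \<in> set ts" "w \<le> (\<phi> z - \<phi> y) \<bullet> u"
      using oscillation[OF u] by blast
    have "2 * dist (\<phi> z \<bullet> u) (\<phi> y \<bullet> u)
        \<le> polygon_length (\<lambda>t. \<phi> t \<bullet> u) ts + dist (\<phi> (hd ts) \<bullet> u) (\<phi> (last ts) \<bullet> u)"
      by (rule two_dist_le_closed_polygon_length[OF yz(2,1)])
    moreover have "dist (\<phi> (hd ts) \<bullet> u) (\<phi> (last ts) \<bullet> u) = 0"
      using closed[OF u] by (simp add: dist_real_def inner_diff_left)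
    moreover have "w \<le> dist (\<phi> z \<bullet> u) (\<phi> y \<bullet> u)"
      using yz(3) by (simp add: dist_real_def inner_diff_left)
    ultimately show ?thesis by linarith
  qed
  then have "card B * (2 * w) \<le> (\<Sum>u\<in>B. polygon_length (\<lambda>t. \<phi> t \<bullet> u) ts)"
    using sum_mono[of B "\<lambda>_. 2 * w"] by simp
  also have "\<dots> \<le> sqrt (card B) * polygon_length \<phi> ts"
    by (rule sum_polygon_length_inner_le[OF assms(1-3)])
  finally have "sqrt (card B) * (2 * sqrt (card B) * w) \<le> sqrt (card B) * polygon_length \<phi> ts"
    by (simp add: algebra_simps)
  then show ?thesis
    using polygon_length_nonneg[of \<phi> ts] by (cases "card B = 0") auto
qed

lemma support_fun_le_of_subset_convex_hull:
  assumes "K \<noteq> {}" and "K \<subseteq> convex hull S" and "\<And>x. x \<in> S \<Longrightarrow> x \<bullet> u \<le> c"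
  shows "support_fun K u \<le> c"
proof -
  have "convex hull S \<subseteq> {x. u \<bullet> x \<le> c}"
  proof (rule hull_minimal)
    show "S \<subseteq> {x. u \<bullet> x \<le> c}" using assms(3) by (auto simp: inner_commute)
  qed (rule convex_halfspace_le)
  then show ?thesis
    unfolding support_fun_def using assms(1,2)
    by (intro cSUP_least) (auto simp: inner_commute)
qed

lemma width_fun_le_of_subset_convex_hull:
  assumes "K \<noteq> {}" and "K \<subseteq> convex hull S" and "compact S" and "S \<noteq> {}"
  shows "\<exists>s\<in>S. \<exists>t\<in>S. width_fun K u \<le> (t - s) \<bullet> u"
proof -
  have cont: "continuous_on S (\<lambda>x. x \<bullet> u)"
    by (intro continuous_intros)
  obtain t where "t \<in> S" and t: "\<And>x. x \<in> S \<Longrightarrow> x \<bullet> u \<le> t \<bullet> u"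
    using continuous_attains_sup[OF assms(3,4) cont] by blast
  obtain s where "s \<in> S" and s: "\<And>x. x \<in> S \<Longrightarrow> s \<bullet> u \<le> x \<bullet> u"
    using continuous_attains_inf[OF assms(3,4) cont] by blast
  have "support_fun K u \<le> t \<bullet> u"
    using support_fun_le_of_subset_convex_hull[OF assms(1,2)] t by blast
  moreover have "support_fun K (- u) \<le> - (s \<bullet> u)"
    using support_fun_le_of_subset_convex_hull[OF assms(1,2)] s by force
  ultimately have "width_fun K u \<le> (t - s) \<bullet> u"
    unfolding width_fun_def by (simp add: inner_diff_left)
  then show ?thesis using \<open>s \<in> S\<close> \<open>t \<in> S\<close> by blast
qed

lemma width_fun_nonneg:
  assumes "K \<noteq> {}" and "bounded K"
  shows "0 \<le> width_fun K u"
proof -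
  obtain x where x: "x \<in> K" using assms(1) by blast
  have bdd: "bdd_above ((\<lambda>x. x \<bullet> v) ` K)" for v
    using assms(2) by (intro bounded_imp_bdd_above bounded_linear_image bounded_linear_inner_left)
  have "x \<bullet> u \<le> support_fun K u" and "x \<bullet> (- u) \<le> support_fun K (- u)"
    unfolding support_fun_def using x by (intro cSUP_upper bdd; assumption)+
  then show ?thesis unfolding width_fun_def by simp
qed

lemma constant_width_nonneg:
  fixes K :: "'a::euclidean_space set"
  assumes "K \<noteq> {}" and "bounded K" and "constant_width K \<Theta>"
  shows "0 \<le> \<Theta>"
proof -
  obtain u :: 'a where "u \<in> Basis" using SOME_Basis by blast
  then have "width_fun K u = \<Theta>"
    using assms(3) unfolding constant_width_def by simp
  then show ?thesis using width_fun_nonneg[OF assms(1,2), of u] by simp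
qed

lemma ex_partition_of_superset:
  fixes a b :: real
  assumes "a \<le> b" and "finite F" and "F \<subseteq> {a..b}"
  shows "\<exists>ts. partition_of a b ts \<and> F \<subseteq> set ts"
proof -
  define T where "T = insert a (insert b F)"
  define ts where "ts = sorted_list_of_set T"
  have "finite T" and "T \<subseteq> {a..b}" using assms unfolding T_def by auto
  then have set_ts: "set ts = T" and sorted: "sorted_wrt (<) ts"
    unfolding ts_def by (auto simp: strict_sorted_iff)
  then have "ts \<noteq> []" and a: "a \<in> set ts" and b: "b \<in> set ts"
    unfolding T_def by auto
  have "hd ts \<le> a"
    using sorted a by (cases ts) (auto simp: less_imp_le)
  moreover have "b \<le> last ts"
  proof -
    obtain ys z where "ts = ys @ [z]" using \<open>ts \<noteq> []\<close> by (metis rev_exhaust)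
    then show ?thesis using sorted b by (auto simp: sorted_wrt_append less_imp_le)
  qed
  moreover have "a \<le> hd ts" and "last ts \<le> b"
    using \<open>ts \<noteq> []\<close> \<open>T \<subseteq> {a..b}\<close> set_ts hd_in_set last_in_set by fastforce+
  ultimately show ?thesis
    using \<open>ts \<noteq> []\<close> sorted set_ts unfolding partition_of_def T_def by auto
qed

lemma polygon_length_le_curve_length:
  assumes "partition_of a b ts"
  shows "ereal (polygon_length \<phi> ts) \<le> curve_length \<phi> a b"
  unfolding curve_length_def sum_zip_dist_eq_polygon_length[symmetric]
  by (rule SUP_upper) (use assms in simp)

lemma ex_orthonormal_set_orthogonal_to:
  fixes d :: "'a::euclidean_space"
  obtains B where "finite B" and "pairwise orthogonal B" and "\<And>u. u \<in> B \<Longrightarrow> norm u = 1"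
    and "\<And>u. u \<in> B \<Longrightarrow> d \<bullet> u = 0" and "real DIM('a) - 1 \<le> card B"
proof -
  obtain B where B: "B \<subseteq> {x. d \<bullet> x = 0}" "pairwise orthogonal B" "\<And>x. x \<in> B \<Longrightarrow> norm x = 1"
      "independent B" "card B = dim {x. d \<bullet> x = 0}"
    using orthonormal_basis_subspace[OF subspace_hyperplane[of d]] by metis
  have "real DIM('a) - 1 \<le> card B"
    using B(5) dim_hyperplane[of d] by (cases "d = 0") auto
  then show ?thesis
    using that B independent_imp_finite by blast
qed

theorem curve_length_ge_constant_width:
  fixes \<phi> :: "real \<Rightarrow> 'a::euclidean_space"
  assumes "K \<noteq> {}" and "constant_width K \<Theta>"
    and "a \<le> b" and "continuous_on {a..b} \<phi>" and "K \<subseteq> convex hull (\<phi> ` {a..b})"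
  shows "ereal (2 * sqrt (real DIM('a) - 1) * \<Theta>) \<le> curve_length \<phi> a b"
proof -
  have curve: "compact (\<phi> ` {a..b})" "\<phi> ` {a..b} \<noteq> {}"
    using assms(3,4) by (auto intro: compact_continuous_image)
  then have "bounded K"
    using assms(5) compact_convex_hull bounded_subset compact_imp_bounded by blast
  have \<Theta>_eq: "width_fun K u = \<Theta>" if "norm u = 1" for u
    using assms(2) that unfolding constant_width_def by simp
  obtain B where B: "finite B" "pairwise orthogonal B" "\<And>u. u \<in> B \<Longrightarrow> norm u = 1"
      and closed: "\<And>u. u \<in> B \<Longrightarrow> (\<phi> b - \<phi> a) \<bullet> u = 0" and card: "real DIM('a) - 1 \<le> card B"
    using ex_orthonormal_set_orthogonal_to[of "\<phi> b - \<phi> a"] by metis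
  have "\<forall>u\<in>B. \<exists>s\<in>{a..b}. \<exists>t\<in>{a..b}. \<Theta> \<le> (\<phi> t - \<phi> s) \<bullet> u"
    using width_fun_le_of_subset_convex_hull[OF assms(1,5) curve] \<Theta>_eq B(3) by fastforce
  then obtain s t where st: "\<And>u. u \<in> B \<Longrightarrow> s u \<in> {a..b} \<and> t u \<in> {a..b} \<and> \<Theta> \<le> (\<phi> (t u) - \<phi> (s u)) \<bullet> u"
    by metis
  obtain ts where ts: "partition_of a b ts" "s ` B \<union> t ` B \<subseteq> set ts"
    using ex_partition_of_superset[OF assms(3), of "s ` B \<union> t ` B"] B(1) st by blast
  have "2 * sqrt (card B) * \<Theta> \<le> polygon_length \<phi> ts"
  proof (rule polygon_length_ge_orthonormal_oscillation[OF B])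
    show "(\<phi> (last ts) - \<phi> (hd ts)) \<bullet> u = 0" if "u \<in> B" for u
      using ts(1) closed[OF that] unfolding partition_of_def by simp
    show "\<exists>y\<in>set ts. \<exists>z\<in>set ts. \<Theta> \<le> (\<phi> z - \<phi> y) \<bullet> u" if "u \<in> B" for u
      using st[OF that] ts(2) that by blast
  qed
  moreover have "2 * sqrt (real DIM('a) - 1) * \<Theta> \<le> 2 * sqrt (card B) * \<Theta>"
    using card constant_width_nonneg[OF assms(1) \<open>bounded K\<close> assms(2)] by (simp add: mult_right_mono)
  ultimately show ?thesis
    using polygon_length_le_curve_length[OF ts(1)] order_trans ereal_less_eq(3) by metis
qed

lemma two_mult_pi_minus_one_mult_sqrt_le:
  assumes "0 \<le> x"
  shows "2 * (pi - 1) * sqrt (x / (2 * pi)) \<le> 2 * sqrt x"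
proof -
  have "3 * 0.8 \<le> pi * (4 - pi)"
    using pi_approx by (intro mult_mono) auto
  then have "(pi - 1)\<^sup>2 \<le> 2 * pi"
    by (simp add: power2_eq_square algebra_simps)
  then have "pi - 1 \<le> sqrt (2 * pi)"
    by (rule real_le_rsqrt)
  then have "(pi - 1) * sqrt x \<le> sqrt (2 * pi) * sqrt x"
    by (rule mult_right_mono) (simp add: assms)
  then show ?thesis
    by (simp add: real_sqrt_divide field_simps)
qed

theorem corollary1:
  fixes K :: "'a::euclidean_space set" and \<Theta> :: real
    and \<phi> :: "real \<Rightarrow> 'a" and a b :: real
  assumes "DIM('a) \<ge> 2"
    and "convex_body K"
    and "constant_width K \<Theta>"
    and "a \<le> b"
    and "continuous_on {a..b} \<phi>"
    and "K \<subseteq> convex hull (\<phi> ` {a..b})"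
  shows "curve_length \<phi> a b \<ge>
           ereal (2 * (pi - 1) * sqrt ((real DIM('a) - 1) / (2 * pi)) * \<Theta>)"
proof -
  have "K \<noteq> {}" and "bounded K"
    using assms(2) compact_imp_bounded unfolding convex_body_def by auto
  then have "0 \<le> \<Theta>" using constant_width_nonneg assms(3) by blast
  moreover have "2 * (pi - 1) * sqrt ((real DIM('a) - 1) / (2 * pi)) \<le> 2 * sqrt (real DIM('a) - 1)"
    using two_mult_pi_minus_one_mult_sqrt_le DIM_positive[where 'a='a] by simp
  ultimately have "ereal (2 * (pi - 1) * sqrt ((real DIM('a) - 1) / (2 * pi)) * \<Theta>)
      \<le> ereal (2 * sqrt (real DIM('a) - 1) * \<Theta>)"
    by (simp add: mult_right_mono)
  also have "\<dots> \<le> curve_length \<phi> a b"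
    using curve_length_ge_constant_width[OF \<open>K \<noteq> {}\<close> assms(3-6)] .
  finally show ?thesis .
qed

end
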